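(* In the discrete scheme described in the context, suppose that for some parcels $j_1,j_2\in\{1,\dots,n\}$ and some integer $k\ge0$ one has $\alpha_{k\delta t}(j_1)<\alpha_{k\delta t}(j_2)$ and $\alpha_{(k+1)\delta t}(j_1)>\alpha_{(k+1)\delta t}(j_2)$. Then $\theta^M_{j_1}>\theta^M_{j_2}$. In particular $\alpha_{l\delta t}(j_1)>\alpha_{l\delta t}(j_2)$ for all $l>k$.
   Context: $Q^{sat}:\mathbb{R}^3\to\mathbb{R}$ is smooth with $\partial_\theta Q^{sat}>0$, $\partial_zQ^{sat}<0$. $\Theta(w,z,t)$ is the solution $\theta$ of $\theta+Q^{sat}(\theta,z,t)=w$ (assumed well defined), with $\partial_w\Theta>0$, $\partial_z\Theta>0$. Discrete scheme. Fix $n\ge1$, $\delta t>0$, $z_i=i/n$. There are $n$ parcels $j=1,\dots,n$; initially parcel $j$ is at position $j$ with value $\theta^n_j$, where $\theta^n_1\le\dots\le\theta^n_n$ and $q^n_j\le Q^{sat}(\theta^n_j,z_j,0)$; parcel $j$ carries the fixed number $\theta^M_j=\theta^n_j+q^n_j$. One time step from $k\delta t$ to $(k+1)\delta t$, with $\tau=(k+1)\delta t$: positions $m=n,\dots,1$ are processed in this order. At stage $m$, with current configuration (parcel $p(i)$ at position $i$ with value $\vartheta_i$), position $i$ is wet if $\vartheta_i<\Theta(\theta^M_{p(i)},z_i,\tau)$; a wet position $i_0\le m$ is eligible if for every $i$ with $i_0<i\le m$, either $i$ is not wet and $\vartheta_i<\Theta(\theta^M_{p(i_0)},z_i,\tau)$,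 or $i$ is wet and $\theta^M_{p(i_0)}>\theta^M_{p(i)}$. If some position is eligible, let $i_*$ be the eligible position whose parcel has the largest $\theta^M$ (largest position in case of ties); that parcel moves to position $m$ with new value $\Theta(\theta^M_{p(i_* )},z_m,\tau)$, the parcels at $i_*+1,\dots,m$ move down one position keeping their values, others unchanged; otherwise nothing changes. After stage $1$ one has the configuration at time $(k+1)\delta t$. $\alpha_{k\delta t}(j)$ denotes the position of parcel $j$ after $k$ time steps ($\alpha_0=id$). *)

theory Defs
  imports "HOL-Analysis.Analysis"
begin

text \<open>A function is C-infinity iff it lies in such a set (all iterated partial
 derivatives exist and are continuous).\<close>

definition partials_closed :: "(real \<Rightarrow> real \<Rightarrow> real \<Rightarrow> real) set \<Rightarrow> bool" where
  "partials_closed F \<longleftrightarrow>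
     (\<forall>f\<in>F.
        continuous_on UNIV (\<lambda>x::real \<times> real \<times> real. f (fst x) (fst (snd x)) (snd (snd x))) \<and>
        (\<exists>g\<in>F. \<forall>a b c. ((\<lambda>x. f x b c) has_real_derivative g a b c) (at a)) \<and>
        (\<exists>g\<in>F. \<forall>a b c. ((\<lambda>y. f a y c) has_real_derivative g a b c) (at b)) \<and>
        (\<exists>g\<in>F. \<forall>a b c. ((\<lambda>s. f a b s) has_real_derivative g a b c) (at c)))"

definition smooth3 :: "(real \<Rightarrow> real \<Rightarrow> real \<Rightarrow> real) \<Rightarrow> bool" where
  "smooth3 f \<longleftrightarrow> (\<exists>F. f \<in> F \<and> partials_closed F)"

definition Theta :: "(real \<Rightarrow> real \<Rightarrow> real \<Rightarrow> real) \<Rightarrow> real \<Rightarrow> real \<Rightarrow> real \<Rightarrow> real" where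
  "Theta Q w z t = (THE th. th + Q th z t = w)"

text \<open>A configuration is a pair (p, v): p i is the parcel at position i and
 v i its current value (positions 1..n). thM j is the fixed number of parcel j,
 Th is the function Theta, z i = i / n, tau is the new time.\<close>

type_synonym config = "(nat \<Rightarrow> nat) \<times> (nat \<Rightarrow> real)"

definition zpos :: "nat \<Rightarrow> nat \<Rightarrow> real" where
  "zpos n i = real i / real n"

definition wet :: "(real \<Rightarrow> real \<Rightarrow> real \<Rightarrow> real) \<Rightarrow> (nat \<Rightarrow> real) \<Rightarrow> nat \<Rightarrow> real \<Rightarrow> config \<Rightarrow> nat \<Rightarrow> bool" where
  "wet Th thM n tau c i \<longleftrightarrow> snd c i < Th (thM (fst c i)) (zpos n i) tau"

definition eligible :: "(real \<Rightarrow> real \<Rightarrow> real \<Rightarrow> real) \<Rightarrow> (nat \<Rightarrow> real) \<Rightarrow> nat \<Rightarrow> real \<Rightarrow> nat \<Rightarrow> config \<Rightarrow> nat \<Rightarrow> bool" where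
  "eligible Th thM n tau m c i0 \<longleftrightarrow>
     1 \<le> i0 \<and> i0 \<le> m \<and> wet Th thM n tau c i0 \<and>
     (\<forall>i. i0 < i \<and> i \<le> m \<longrightarrow>
        (\<not> wet Th thM n tau c i \<and> snd c i < Th (thM (fst c i0)) (zpos n i) tau) \<or>
        (wet Th thM n tau c i \<and> thM (fst c i0) > thM (fst c i)))"

definition selected :: "(real \<Rightarrow> real \<Rightarrow> real \<Rightarrow> real) \<Rightarrow> (nat \<Rightarrow> real) \<Rightarrow> nat \<Rightarrow> real \<Rightarrow> nat \<Rightarrow> config \<Rightarrow> nat" where
  "selected Th thM n tau m c =
     (GREATEST i. eligible Th thM n tau m c i \<and>
        (\<forall>i'. eligible Th thM n tau m c i' \<longrightarrow> thM (fst c i') \<le> thM (fst c i)))"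

definition stage :: "(real \<Rightarrow> real \<Rightarrow> real \<Rightarrow> real) \<Rightarrow> (nat \<Rightarrow> real) \<Rightarrow> nat \<Rightarrow> real \<Rightarrow> nat \<Rightarrow> config \<Rightarrow> config" where
  "stage Th thM n tau m c =
     (if \<exists>i. eligible Th thM n tau m c i then
        (let s = selected Th thM n tau m c;
             p = fst c; v = snd c in
         (\<lambda>i. if i < s \<or> m < i then p i else if i < m then p (Suc i) else p s,
          \<lambda>i. if i < s \<or> m < i then v i else if i < m then v (Suc i)
               else Th (thM (p s)) (zpos n m) tau))
      else c)"

primrec stages :: "(real \<Rightarrow> real \<Rightarrow> real \<Rightarrow> real) \<Rightarrow> (nat \<Rightarrow> real) \<Rightarrow> nat \<Rightarrow> real \<Rightarrow> nat \<Rightarrow> config \<Rightarrow> config" where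
  "stages Th thM n tau 0 c = c"
| "stages Th thM n tau (Suc m) c = stages Th thM n tau m (stage Th thM n tau (Suc m) c)"

primrec config_at :: "(real \<Rightarrow> real \<Rightarrow> real \<Rightarrow> real) \<Rightarrow> (nat \<Rightarrow> real) \<Rightarrow> nat \<Rightarrow> real \<Rightarrow> (nat \<Rightarrow> real) \<Rightarrow> nat \<Rightarrow> config" where
  "config_at Th thM n dt th0 0 = (id, th0)"
| "config_at Th thM n dt th0 (Suc k) =
     stages Th thM n (real (Suc k) * dt) n (config_at Th thM n dt th0 k)"

definition alpha :: "(real \<Rightarrow> real \<Rightarrow> real \<Rightarrow> real) \<Rightarrow> (nat \<Rightarrow> real) \<Rightarrow> nat \<Rightarrow> real \<Rightarrow> (nat \<Rightarrow> real) \<Rightarrow> nat \<Rightarrow> nat \<Rightarrow> nat" where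
  "alpha Th thM n dt th0 k j =
     (THE i. 1 \<le> i \<and> i \<le> n \<and> fst (config_at Th thM n dt th0 k) i = j)"

end

theory Submission
  imports Defs
begin

text \<open>Each stage moves one parcel, at some position s, up to position m and shifts the parcels
  in between down by one. Every parcel it passes has strictly smaller \<open>\<theta>\<^sup>M\<close>: for a wet
  position this is part of eligibility, and at a dry position i the value lies between
  \<open>\<Theta>\<close> of its own parcel's \<open>\<theta>\<^sup>M\<close> and \<open>\<Theta>\<close> of the moving parcel's \<open>\<theta>\<^sup>M\<close>, so strict
  monotonicity of \<open>\<Theta>\<close> in w decides. Hence, over any number of stages and time steps, a parcel
  can only overtake parcels of strictly smaller \<open>\<theta>\<^sup>M\<close>, and an overtaken parcel never catches up.\<close>

definition overtakes_only_smaller :: "(nat \<Rightarrow> real) \<Rightarrow> nat \<Rightarrow> config \<Rightarrow> config \<Rightarrow> bool" where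
  "overtakes_only_smaller thM n c c' \<longleftrightarrow>
     (\<exists>g. inj_on g {1..n} \<and>
        (\<forall>i\<in>{1..n}. g i \<in> {1..n} \<and> fst c' (g i) = fst c i) \<and>
        (\<forall>a\<in>{1..n}. \<forall>b\<in>{1..n}. a < b \<longrightarrow> thM (fst c a) \<le> thM (fst c b) \<longrightarrow> g a < g b))"

lemma overtakes_only_smaller_refl: "overtakes_only_smaller thM n c c"
  unfolding overtakes_only_smaller_def by (rule exI[of _ id]) auto

lemma overtakes_only_smaller_trans:
  assumes "overtakes_only_smaller thM n c1 c2" "overtakes_only_smaller thM n c2 c3"
  shows "overtakes_only_smaller thM n c1 c3"
proof -
  obtain g1 where g1: "inj_on g1 {1..n}" "\<forall>i\<in>{1..n}. g1 i \<in> {1..n} \<and> fst c2 (g1 i) = fst c1 i"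
    "\<forall>a\<in>{1..n}. \<forall>b\<in>{1..n}. a < b \<longrightarrow> thM (fst c1 a) \<le> thM (fst c1 b) \<longrightarrow> g1 a < g1 b"
    using assms(1) unfolding overtakes_only_smaller_def by blast
  obtain g2 where g2: "inj_on g2 {1..n}" "\<forall>i\<in>{1..n}. g2 i \<in> {1..n} \<and> fst c3 (g2 i) = fst c2 i"
    "\<forall>a\<in>{1..n}. \<forall>b\<in>{1..n}. a < b \<longrightarrow> thM (fst c2 a) \<le> thM (fst c2 b) \<longrightarrow> g2 a < g2 b"
    using assms(2) unfolding overtakes_only_smaller_def by blast
  have "inj_on (g2 \<circ> g1) {1..n}"
    using g1 g2 by (intro comp_inj_on) (auto intro: inj_on_subset)
  moreover have "\<forall>i\<in>{1..n}. (g2 \<circ> g1) i \<in> {1..n} \<and> fst c3 ((g2 \<circ> g1) i) = fst c1 i"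
    using g1 g2 by auto
  moreover have "(g2 \<circ> g1) a < (g2 \<circ> g1) b"
    if "a \<in> {1..n}" "b \<in> {1..n}" "a < b" "thM (fst c1 a) \<le> thM (fst c1 b)" for a b
    using that g1 g2 by simp
  ultimately show ?thesis unfolding overtakes_only_smaller_def by blast
qed

lemma overtakes_only_smaller_bij:
  assumes "overtakes_only_smaller thM n c c'" "bij_betw (fst c) {1..n} {1..n}"
  shows "bij_betw (fst c') {1..n} {1..n}"
proof -
  obtain g where g: "inj_on g {1..n}" "\<forall>i\<in>{1..n}. g i \<in> {1..n} \<and> fst c' (g i) = fst c i"
    using assms(1) unfolding overtakes_only_smaller_def by blast
  have "g ` {1..n} = {1..n}" using g by (intro endo_inj_surj) auto
  hence "fst c' ` {1..n} = fst c' ` g ` {1..n}" by simp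
  also have "\<dots> = fst c ` {1..n}" using g(2) by (force simp: image_iff)
  also have "\<dots> = {1..n}" using assms(2) by (simp add: bij_betw_def)
  finally have im: "fst c' ` {1..n} = {1..n}" .
  hence "inj_on (fst c') {1..n}" by (intro eq_card_imp_inj_on) auto
  thus ?thesis using im by (simp add: bij_betw_def)
qed

lemma selected_eligible:
  assumes "eligible Th thM n tau m c i"
  shows "eligible Th thM n tau m c (selected Th thM n tau m c)"
proof -
  define E where "E = {i. eligible Th thM n tau m c i}"
  define P where "P = (\<lambda>i. eligible Th thM n tau m c i \<and>
    (\<forall>i'. eligible Th thM n tau m c i' \<longrightarrow> thM (fst c i') \<le> thM (fst c i)))"
  have "finite E" by (rule finite_subset[of _ "{..m}"]) (auto simp: E_def eligible_def)
  moreover have "E \<noteq> {}" using assms by (auto simp: E_def)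
  ultimately have "Max ((\<lambda>i. thM (fst c i)) ` E) \<in> (\<lambda>i. thM (fst c i)) ` E"
    by (intro Max_in) auto
  then obtain i' where "i' \<in> E" "thM (fst c i') = Max ((\<lambda>i. thM (fst c i)) ` E)"
    by auto
  with \<open>finite E\<close> have "P i'" by (auto simp: P_def E_def)
  hence "P (Greatest P)"
    by (rule GreatestI_nat[of P i' m]) (auto simp: P_def eligible_def)
  thus ?thesis by (simp add: P_def selected_def)
qed

lemma eligible_passes_smaller:
  assumes mono: "\<And>z t. strict_mono (\<lambda>w. Th w z t)"
    and el: "eligible Th thM n tau m c s" and i: "s < i" "i \<le> m"
  shows "thM (fst c i) < thM (fst c s)"
proof -
  have "(\<not> wet Th thM n tau c i \<and> snd c i < Th (thM (fst c s)) (zpos n i) tau) \<or>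
        (wet Th thM n tau c i \<and> thM (fst c i) < thM (fst c s))"
    using el i unfolding eligible_def by blast
  moreover have "thM (fst c i) < thM (fst c s)"
    if "Th (thM (fst c i)) (zpos n i) tau < Th (thM (fst c s)) (zpos n i) tau"
    using that strict_mono_less_eq[OF mono] by (meson not_le)
  ultimately show ?thesis unfolding wet_def by fastforce
qed

definition stage_shift :: "nat \<Rightarrow> nat \<Rightarrow> nat \<Rightarrow> nat" where
  "stage_shift s m i = (if i < s \<or> m < i then i else if i = s then m else i - 1)"

lemma stage_overtakes_only_smaller:
  assumes mono: "\<And>z t. strict_mono (\<lambda>w. Th w z t)" and "m \<le> n"
  shows "overtakes_only_smaller thM n c (stage Th thM n tau m c)"
proof (cases "\<exists>i. eligible Th thM n tau m c i")
  case False
  thus ?thesis by (simp add: stage_def overtakes_only_smaller_refl)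
next
  case True
  define s where "s = selected Th thM n tau m c"
  have el: "eligible Th thM n tau m c s"
    using True selected_eligible unfolding s_def by blast
  hence s: "1 \<le> s" "s \<le> m" unfolding eligible_def by auto
  have parcels: "fst (stage Th thM n tau m c) = (\<lambda>i. if i < s \<or> m < i then fst c i
      else if i < m then fst c (Suc i) else fst c s)"
    using True unfolding stage_def s_def Let_def by simp
  have "inj_on (stage_shift s m) {1..n}"
    unfolding inj_on_def stage_shift_def using s by auto
  moreover have "\<forall>i\<in>{1..n}. stage_shift s m i \<in> {1..n} \<and>
      fst (stage Th thM n tau m c) (stage_shift s m i) = fst c i"
    using s \<open>m \<le> n\<close> unfolding parcels stage_shift_def by auto
  moreover have "stage_shift s m a < stage_shift s m b"
    if "a \<in> {1..n}" "b \<in> {1..n}" "a < b" "thM (fst c a) \<le> thM (fst c b)" for a b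
  proof (cases "a = s \<and> b \<le> m")
    case True
    thus ?thesis using eligible_passes_smaller[where Th = Th, OF mono el] that by fastforce
  next
    case False
    thus ?thesis using that s unfolding stage_shift_def by auto
  qed
  ultimately show ?thesis unfolding overtakes_only_smaller_def by blast
qed

lemma stages_overtakes_only_smaller:
  assumes mono: "\<And>z t. strict_mono (\<lambda>w. Th w z t)"
  shows "m \<le> n \<Longrightarrow> overtakes_only_smaller thM n c (stages Th thM n tau m c)"
proof (induction m arbitrary: c)
  case 0
  show ?case by (simp add: overtakes_only_smaller_refl)
next
  case (Suc m)
  show ?case
    using overtakes_only_smaller_trans[OF stage_overtakes_only_smaller[where Th = Th, OF mono Suc.prems]
        Suc.IH[OF Suc_leD[OF Suc.prems]]]
    by simp
qed

lemma config_at_Suc_overtakes_only_smaller: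
  assumes "\<And>z t. strict_mono (\<lambda>w. Th w z t)"
  shows "overtakes_only_smaller thM n (config_at Th thM n dt th0 k) (config_at Th thM n dt th0 (Suc k))"
  using stages_overtakes_only_smaller[where Th = Th, OF assms] by simp

lemma config_at_bij:
  assumes "\<And>z t. strict_mono (\<lambda>w. Th w z t)"
  shows "bij_betw (fst (config_at Th thM n dt th0 k)) {1..n} {1..n}"
proof (induction k)
  case 0
  show ?case by (simp add: bij_betw_def)
next
  case (Suc k)
  thus ?case
    by (rule overtakes_only_smaller_bij[OF config_at_Suc_overtakes_only_smaller[where Th = Th, OF assms]])
qed

lemma alpha_eqI:
  assumes "bij_betw (fst (config_at Th thM n dt th0 k)) {1..n} {1..n}"
    and "a \<in> {1..n}" "fst (config_at Th thM n dt th0 k) a = j"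
  shows "alpha Th thM n dt th0 k j = a"
  unfolding alpha_def
proof (rule the_equality)
  fix i assume "1 \<le> i \<and> i \<le> n \<and> fst (config_at Th thM n dt th0 k) i = j"
  thus "i = a" using assms by (auto simp: bij_betw_def dest: inj_onD)
qed (use assms(2,3) in simp)

lemma alpha_position:
  assumes "bij_betw (fst (config_at Th thM n dt th0 k)) {1..n} {1..n}" and "j \<in> {1..n}"
  shows "alpha Th thM n dt th0 k j \<in> {1..n}"
    and "fst (config_at Th thM n dt th0 k) (alpha Th thM n dt th0 k j) = j"
proof -
  have "j \<in> fst (config_at Th thM n dt th0 k) ` {1..n}"
    using assms by (simp add: bij_betw_def)
  then obtain a where "a \<in> {1..n}" "fst (config_at Th thM n dt th0 k) a = j"
    by blast
  thus "alpha Th thM n dt th0 k j \<in> {1..n}"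
    and "fst (config_at Th thM n dt th0 k) (alpha Th thM n dt th0 k j) = j"
    using alpha_eqI[OF assms(1)] by simp_all
qed

lemma alpha_Suc_keeps_order:
  assumes mono: "\<And>z t. strict_mono (\<lambda>w. Th w z t)"
    and j: "j1 \<in> {1..n}" "j2 \<in> {1..n}"
    and lt: "alpha Th thM n dt th0 k j1 < alpha Th thM n dt th0 k j2"
    and le: "thM j1 \<le> thM j2"
  shows "alpha Th thM n dt th0 (Suc k) j1 < alpha Th thM n dt th0 (Suc k) j2"
proof -
  let ?c = "config_at Th thM n dt th0 k" and ?c' = "config_at Th thM n dt th0 (Suc k)"
  let ?a1 = "alpha Th thM n dt th0 k j1" and ?a2 = "alpha Th thM n dt th0 k j2"
  obtain g where g: "\<forall>i\<in>{1..n}. g i \<in> {1..n} \<and> fst ?c' (g i) = fst ?c i"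
    "\<forall>a\<in>{1..n}. \<forall>b\<in>{1..n}. a < b \<longrightarrow> thM (fst ?c a) \<le> thM (fst ?c b) \<longrightarrow> g a < g b"
    using config_at_Suc_overtakes_only_smaller[where Th = Th, OF mono]
    unfolding overtakes_only_smaller_def by blast
  note pos = alpha_position[OF config_at_bij[where Th = Th, OF mono]]
  have "g ?a1 < g ?a2" using g(2) pos[OF j(1)] pos[OF j(2)] lt le by simp
  moreover have "alpha Th thM n dt th0 (Suc k) j = g (alpha Th thM n dt th0 k j)"
    if "j \<in> {1..n}" for j
    using alpha_eqI[OF config_at_bij[where Th = Th, OF mono]] g(1) pos[OF that] by auto
  ultimately show ?thesis using j by simp
qed

lemma alpha_keeps_order:
  assumes mono: "\<And>z t. strict_mono (\<lambda>w. Th w z t)"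
    and j: "j1 \<in> {1..n}" "j2 \<in> {1..n}"
    and lt: "alpha Th thM n dt th0 k j1 < alpha Th thM n dt th0 k j2"
    and le: "thM j1 \<le> thM j2" and "k \<le> l"
  shows "alpha Th thM n dt th0 l j1 < alpha Th thM n dt th0 l j2"
  using \<open>k \<le> l\<close>
  by (induction l rule: dec_induct) (use lt alpha_Suc_keeps_order[where Th = Th, OF mono j _ le] in auto)

lemma Theta_strict_mono:
  assumes "\<forall>w z t. \<exists>d>0. ((\<lambda>x. Theta Q x z t) has_real_derivative d) (at w)"
  shows "strict_mono (\<lambda>w. Theta Q w z t)"
proof (rule strict_monoI)
  fix a b :: real assume "a < b"
  thus "Theta Q a z t < Theta Q b z t"
    by (rule DERIV_pos_imp_increasing[where f = "\<lambda>x. Theta Q x z t"]) (use assms in blast)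
qed

theorem lemma3p5:
  fixes Q :: "real \<Rightarrow> real \<Rightarrow> real \<Rightarrow> real"
    and n :: nat and dt :: real
    and th0 q :: "nat \<Rightarrow> real"
    and j1 j2 k :: nat
  assumes Q_smooth: "smooth3 Q"
    and Q_theta: "\<forall>a b c. \<exists>d>0. ((\<lambda>x. Q x b c) has_real_derivative d) (at a)"
    and Q_z: "\<forall>a b c. \<exists>d<0. ((\<lambda>y. Q a y c) has_real_derivative d) (at b)"
    and Theta_wd: "\<forall>w z t. \<exists>!th. th + Q th z t = w"
    and Theta_w: "\<forall>w z t. \<exists>d>0. ((\<lambda>x. Theta Q x z t) has_real_derivative d) (at w)"
    and Theta_z: "\<forall>w z t. \<exists>d>0. ((\<lambda>y. Theta Q w y t) has_real_derivative d) (at z)"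
    and n_pos: "1 \<le> n"
    and dt_pos: "0 < dt"
    and th0_sorted: "\<forall>i j. 1 \<le> i \<and> i \<le> j \<and> j \<le> n \<longrightarrow> th0 i \<le> th0 j"
    and q_sat: "\<forall>j. 1 \<le> j \<and> j \<le> n \<longrightarrow> q j \<le> Q (th0 j) (zpos n j) 0"
    and j1: "j1 \<in> {1..n}" and j2: "j2 \<in> {1..n}"
    and before: "alpha (Theta Q) (\<lambda>j. th0 j + q j) n dt th0 k j1
                   < alpha (Theta Q) (\<lambda>j. th0 j + q j) n dt th0 k j2"
    and after: "alpha (Theta Q) (\<lambda>j. th0 j + q j) n dt th0 (Suc k) j1
                   > alpha (Theta Q) (\<lambda>j. th0 j + q j) n dt th0 (Suc k) j2"
  shows "th0 j1 + q j1 > th0 j2 + q j2 \<and>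
         (\<forall>l>k. alpha (Theta Q) (\<lambda>j. th0 j + q j) n dt th0 l j1
                 > alpha (Theta Q) (\<lambda>j. th0 j + q j) n dt th0 l j2)"
proof
  note mono = Theta_strict_mono[OF Theta_w]
  show larger: "th0 j1 + q j1 > th0 j2 + q j2"
    using alpha_Suc_keeps_order[where Th = "Theta Q", OF mono j1 j2 before] after by fastforce
  show "\<forall>l>k. alpha (Theta Q) (\<lambda>j. th0 j + q j) n dt th0 l j1
              > alpha (Theta Q) (\<lambda>j. th0 j + q j) n dt th0 l j2"
    using alpha_keeps_order[where Th = "Theta Q", OF mono j2 j1 after] larger
    by (auto simp: Suc_le_eq)
qed

end
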